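(* Let $K(q,t)=\sum_{p\ge0}q^{2p^2}t^{2p(p-1)}(1+q^{8p+12}t^{8p+5})\prod_{j=1}^{p}\frac{1+q^{2j+4}t^{2j+1}}{1-q^{2j}t^{2j}}$, viewed as a power series in $q$ whose coefficients are polynomials in $t$. Then $K(q,-1)=\dfrac{1}{1-q^2}$ in $\mathbb{Z}[[q]]$; equivalently $\sum_{p\ge0}q^{2p^2}(1-q^{2p+2})(1-q^{2p+4})(1-q^{8p+12})=1-q^4$. *)

theory Defs
  imports "HOL-Computational_Algebra.Computational_Algebra"
begin

text \<open>For f with constant term 1, fps_right_inverse f 1 is the (genuine) inverse 1/f in the
  power series ring over the commutative ring Z[t].\<close>

definition tvar :: "int poly" where "tvar = [:0, 1:]"

definition Kterm :: "nat \<Rightarrow> int poly fps" where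
  "Kterm p =
     fps_X ^ (2 * p\<^sup>2) * fps_const (tvar ^ (2 * p * (p - 1)))
     * (1 + fps_const (tvar ^ (8 * p + 5)) * fps_X ^ (8 * p + 12))
     * (\<Prod>j\<in>{1..p}. (1 + fps_const (tvar ^ (2 * j + 1)) * fps_X ^ (2 * j + 4))
          * fps_right_inverse (1 - fps_const (tvar ^ (2 * j)) * fps_X ^ (2 * j)) 1)"

text \<open>The p-th summand has q-order at least 2p^2 >= p, so the n-th coefficient of the
  infinite sum over p is the finite sum over p <= n.\<close>
definition K :: "int poly fps" where
  "K = Abs_fps (\<lambda>n. \<Sum>p\<le>n. Kterm p $ n)"

definition K_at_minus1 :: "int fps" where
  "K_at_minus1 = Abs_fps (\<lambda>n. poly (K $ n) (-1))"

end

theory Submission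
  imports Defs
begin

(*
  Specialising t := -1 turns the j-th factor of the product in K into
  (1 - q^(2j+4)) / (1 - q^(2j)).  Writing x = q^2, this product telescopes:
    (1 - x)(1 - x^2) * prod_{j=1..p} (1 - x^(j+2)) / (1 - x^j) = (1 - x^(p+1))(1 - x^(p+2)),
  so (1 - q^2)(1 - q^4) K(q,-1) = sum_p x^(p^2) (1 - x^(p+1))(1 - x^(p+2))(1 - x^(4p+6)).
  The summands of this series telescope in turn: with an explicit polynomial R(x,z) one has
    x^(p^2) (1 - x^(p+1))(1 - x^(p+2))(1 - x^(4p+6))
      = x^(p^2) R(x, x^p) - x^((p+1)^2) R(x, x^(p+1)),   R(x,1) = 1 - x^2,
  hence the partial sums are 1 - x^2 - x^(N^2) R(x, x^N), i.e. the series equals 1 - q^4.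
  Cancelling 1 - q^4 leaves (1 - q^2) K(q,-1) = 1.
*)

definition fps_eval_coeffs :: "'a::comm_ring_1 \<Rightarrow> 'a poly fps \<Rightarrow> 'a fps" where
  "fps_eval_coeffs a f = Abs_fps (\<lambda>n. poly (f $ n) a)"

lemma fps_eval_coeffs_nth [simp]: "fps_eval_coeffs a f $ n = poly (f $ n) a"
  by (simp add: fps_eval_coeffs_def)

lemma fps_eval_coeffs_one [simp]: "fps_eval_coeffs a 1 = 1"
  and fps_eval_coeffs_X [simp]: "fps_eval_coeffs a fps_X = fps_X"
  and fps_eval_coeffs_const [simp]: "fps_eval_coeffs a (fps_const c) = fps_const (poly c a)"
  and fps_eval_coeffs_add [simp]: "fps_eval_coeffs a (f + g) = fps_eval_coeffs a f + fps_eval_coeffs a g"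
  and fps_eval_coeffs_diff [simp]: "fps_eval_coeffs a (f - g) = fps_eval_coeffs a f - fps_eval_coeffs a g"
  and fps_eval_coeffs_mult [simp]: "fps_eval_coeffs a (f * g) = fps_eval_coeffs a f * fps_eval_coeffs a g"
  by (rule fps_ext; simp add: fps_X_def fps_mult_nth poly_sum)+

lemma fps_eval_coeffs_power [simp]: "fps_eval_coeffs a (f ^ k) = fps_eval_coeffs a f ^ k"
  by (induction k) simp_all

lemma fps_eval_coeffs_prod [simp]:
  "fps_eval_coeffs a (\<Prod>j\<in>A. f j) = (\<Prod>j\<in>A. fps_eval_coeffs a (f j))"
  by (induction A rule: infinite_finite_induct) simp_all

lemma fps_right_inverse_unique:
  fixes f g :: "'a::comm_ring_1 fps"
  assumes "f * g = 1" and "f $ 0 = 1"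
  shows "fps_right_inverse f 1 = g"
proof -
  have "g $ 0 = 1"
    using arg_cong[where f = "\<lambda>h. h $ 0", OF assms(1)] assms(2) by simp
  then show ?thesis
    using fps_lr_inverse_unique_ring1(2)[of f g] assms by simp
qed

lemma fps_eval_coeffs_right_inverse:
  assumes "f $ 0 = 1"
  shows "fps_eval_coeffs a (fps_right_inverse f 1) = fps_right_inverse (fps_eval_coeffs a f) 1"
proof (rule fps_right_inverse_unique[symmetric])
  have "f * fps_right_inverse f 1 = 1"
    using assms by (simp add: fps_right_inverse)
  then show "fps_eval_coeffs a f * fps_eval_coeffs a (fps_right_inverse f 1) = 1"
    by (metis fps_eval_coeffs_mult fps_eval_coeffs_one)
  show "fps_eval_coeffs a f $ 0 = 1"
    using assms by simp
qed

lemma poly_tvar [simp]: "poly tvar a = a"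
  by (simp add: tvar_def)

text \<open>At t = -1 every factor of the p-th summand becomes a power series in x = q^2 with
  integer coefficients: the signs of the powers of t cancel those in front of them.\<close>
lemma Kterm_at_minus1:
  defines "x \<equiv> fps_X ^ 2 :: int fps"
  shows "fps_eval_coeffs (-1) (Kterm p) =
    x ^ (p\<^sup>2) * (1 - x ^ (4 * p + 6)) *
    (\<Prod>j\<in>{1..p}. (1 - x ^ (j + 2)) * fps_right_inverse (1 - x ^ j) 1)"
proof -
  have X_power: "fps_X ^ k = x ^ m" if "k = 2 * m" for k m
    by (simp add: x_def that power_mult)
  have odd_factor: "fps_eval_coeffs (-1) (1 + fps_const (tvar ^ (2 * l + 1)) * fps_X ^ (2 * m))
      = 1 - x ^ m" for l m
    by (simp add: X_power power_mult flip: fps_const_neg)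
  have inverse_factor: "fps_eval_coeffs (-1)
      (fps_right_inverse (1 - fps_const (tvar ^ (2 * j)) * fps_X ^ (2 * j)) 1)
    = fps_right_inverse (1 - x ^ j) 1" if "j \<ge> 1" for j
  proof -
    have "fps_eval_coeffs (-1) (1 - fps_const (tvar ^ (2 * j)) * fps_X ^ (2 * j)) = 1 - x ^ j"
      by (simp add: X_power power_mult)
    moreover have "(1 - fps_const (tvar ^ (2 * j)) * fps_X ^ (2 * j)) $ 0 = 1"
      using that by simp
    ultimately show ?thesis
      by (simp add: fps_eval_coeffs_right_inverse)
  qed
  have factor: "fps_eval_coeffs (-1)
      ((1 + fps_const (tvar ^ (2 * j + 1)) * fps_X ^ (2 * j + 4))
        * fps_right_inverse (1 - fps_const (tvar ^ (2 * j)) * fps_X ^ (2 * j)) 1)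
    = (1 - x ^ (j + 2)) * fps_right_inverse (1 - x ^ j) 1" if "j \<in> {1..p}" for j
  proof -
    have "2 * j + 4 = 2 * (j + 2)"
      by simp
    then show ?thesis
      using odd_factor[of j "j + 2"] inverse_factor[of j] that
      by (simp only: fps_eval_coeffs_mult) simp
  qed
  have "fps_eval_coeffs (-1) (\<Prod>j\<in>{1..p}.
      (1 + fps_const (tvar ^ (2 * j + 1)) * fps_X ^ (2 * j + 4))
        * fps_right_inverse (1 - fps_const (tvar ^ (2 * j)) * fps_X ^ (2 * j)) 1)
    = (\<Prod>j\<in>{1..p}. (1 - x ^ (j + 2)) * fps_right_inverse (1 - x ^ j) 1)"
    unfolding fps_eval_coeffs_prod by (rule prod.cong[OF refl factor])
  moreover have "fps_eval_coeffs (-1) (1 + fps_const (tvar ^ (8 * p + 5)) * fps_X ^ (8 * p + 12))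
      = 1 - x ^ (4 * p + 6)"
    using odd_factor[of "4 * p + 2" "4 * p + 6"] by (simp add: algebra_simps)
  moreover have "fps_eval_coeffs (-1) (fps_const (tvar ^ (2 * p * (p - 1)))) = 1"
    by (simp add: power_mult mult.assoc)
  moreover have "fps_eval_coeffs (-1) (fps_X ^ (2 * p\<^sup>2)) = x ^ p\<^sup>2"
    by (simp add: X_power)
  ultimately show ?thesis
    unfolding Kterm_def fps_eval_coeffs_mult
    by simp
qed

text \<open>For a power series x without constant term,
  (1 - x)(1 - x^2) prod_{j=1..p} (1 - x^(j+2)) / (1 - x^j) = (1 - x^(p+1)) (1 - x^(p+2)):
  each step multiplies by 1 - x^(p+3) and divides by 1 - x^(p+1).\<close>
lemma telescoping_product:
  fixes x :: "'a::comm_ring_1 fps"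
  assumes "x $ 0 = 0"
  shows "(1 - x) * (1 - x ^ 2) * (\<Prod>j\<in>{1..p}. (1 - x ^ (j + 2)) * fps_right_inverse (1 - x ^ j) 1)
    = (1 - x ^ (p + 1)) * (1 - x ^ (p + 2))"
proof (induction p)
  case 0
  then show ?case by (simp add: power2_eq_square)
next
  case (Suc p)
  have cancel: "(1 - x ^ (p + 1)) * fps_right_inverse (1 - x ^ (p + 1)) 1 = 1"
    using assms by (intro fps_right_inverse) simp
  have "(1 - x) * (1 - x ^ 2) *
      (\<Prod>j\<in>{1..Suc p}. (1 - x ^ (j + 2)) * fps_right_inverse (1 - x ^ j) 1)
    = (1 - x) * (1 - x ^ 2) *
      (\<Prod>j\<in>{1..p}. (1 - x ^ (j + 2)) * fps_right_inverse (1 - x ^ j) 1)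
      * ((1 - x ^ (p + 3)) * fps_right_inverse (1 - x ^ (p + 1)) 1)"
    by (simp add: mult.assoc eval_nat_numeral)
  also have "\<dots> = ((1 - x ^ (p + 1)) * fps_right_inverse (1 - x ^ (p + 1)) 1)
      * (1 - x ^ (p + 2)) * (1 - x ^ (p + 3))"
    unfolding Suc.IH by (simp only: ac_simps)
  also have "\<dots> = (1 - x ^ (Suc p + 1)) * (1 - x ^ (Suc p + 2))"
    unfolding cancel by (simp add: eval_nat_numeral)
  finally show ?case .
qed

text \<open>The p-th summand of (1 - q^2)(1 - q^4) K(q,-1), written in the variable y = q^2.\<close>
definition summand :: "'a::comm_ring_1 \<Rightarrow> nat \<Rightarrow> 'a" where
  "summand y p = y ^ (p\<^sup>2) * ((1 - y ^ (p + 1)) * (1 - y ^ (p + 2)) * (1 - y ^ (4 * p + 6)))"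

text \<open>The polynomial R(y,z) such that y^(N^2) R(y, y^N) is the tail of the series after N terms.\<close>
definition remainder :: "'a::comm_ring_1 \<Rightarrow> 'a \<Rightarrow> 'a" where
  "remainder y z = 1 + z^2 * y + z^4 * y^4 + z^2 * y^3 - z * y - z * y^2 - z^3 * y^3 - z^3 * y^4"

lemma remainder_one: "remainder y 1 = 1 - y ^ 2"
  by (simp add: remainder_def)

lemma remainder_step:
  fixes y z :: "'a::comm_ring_1"
  shows "(1 - z * y) * (1 - z * y^2) * (1 - z^4 * y^6) = remainder y z - z^2 * y * remainder y (z * y)"
  by (simp add: remainder_def algebra_simps power2_eq_square power3_eq_cube power_numeral_reduce)

lemma summand_telescopes:
  fixes y :: "'a::comm_ring_1"
  shows "summand y p = y ^ (p\<^sup>2) * remainder y (y ^ p)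
    - y ^ ((Suc p)\<^sup>2) * remainder y (y ^ Suc p)"
proof -
  define z where "z = y ^ p"
  have "summand y p = y ^ (p\<^sup>2) * ((1 - z * y) * (1 - z * y^2) * (1 - z^4 * y^6))"
    unfolding summand_def z_def by (simp add: power_add power_mult power2_eq_square ac_simps)
  also have "\<dots> = y ^ (p\<^sup>2) * remainder y z - y ^ (p\<^sup>2) * (z^2 * y) * remainder y (z * y)"
    unfolding remainder_step by (simp add: algebra_simps)
  also have "y ^ (p\<^sup>2) * (z^2 * y) = y ^ ((Suc p)\<^sup>2)"
    unfolding z_def by (simp add: power2_eq_square power_add power_mult algebra_simps)
  finally show ?thesis
    by (simp add: z_def mult.commute)
qed

lemma summand_partial_sum:
  fixes y :: "'a::comm_ring_1"
  shows "(\<Sum>p<N. summand y p) = 1 - y^2 - y ^ (N\<^sup>2) * remainder y (y ^ N)"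
  unfolding summand_telescopes sum_lessThan_telescope'[where f = "\<lambda>p. y ^ (p\<^sup>2) * remainder y (y ^ p)"]
  by (simp add: remainder_one)

lemma Kterm_at_minus1_times_denominator:
  "(1 - fps_X ^ 2) * (1 - fps_X ^ 4) * fps_eval_coeffs (-1) (Kterm p) = summand (fps_X ^ 2 :: int fps) p"
proof -
  define x :: "int fps" where "x = fps_X ^ 2"
  let ?P = "\<Prod>j\<in>{1..p}. (1 - x ^ (j + 2)) * fps_right_inverse (1 - x ^ j) 1"
  have denominator: "(1 - fps_X ^ 2) * (1 - fps_X ^ 4) = (1 - x) * (1 - x ^ 2)"
    by (simp add: x_def flip: power_mult)
  have "x $ 0 = 0"
    by (simp add: x_def)
  have "(1 - x) * (1 - x ^ 2) * (x ^ p\<^sup>2 * (1 - x ^ (4 * p + 6)) * ?P)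
      = x ^ p\<^sup>2 * (1 - x ^ (4 * p + 6)) * ((1 - x) * (1 - x ^ 2) * ?P)"
    by (simp only: ac_simps)
  also have "\<dots> = summand x p"
    unfolding telescoping_product[OF \<open>x $ 0 = 0\<close>] summand_def by (simp only: ac_simps)
  finally show ?thesis
    unfolding Kterm_at_minus1 denominator x_def .
qed

lemma Kterm_at_minus1_nth_eq_0:
  assumes "n < 2 * p\<^sup>2"
  shows "fps_eval_coeffs (-1) (Kterm p) $ n = 0"
  using assms by (simp add: Kterm_at_minus1 mult.assoc fps_X_power_mult_nth flip: power_mult)

lemma K_at_minus1_nth_partial_sum:
  assumes "n < N"
  shows "K_at_minus1 $ n = (\<Sum>p<N. fps_eval_coeffs (-1) (Kterm p)) $ n"
proof -
  have "K_at_minus1 $ n = (\<Sum>p\<le>n. fps_eval_coeffs (-1) (Kterm p) $ n)"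
    by (simp add: K_at_minus1_def K_def poly_sum)
  also have "\<dots> = (\<Sum>p<N. fps_eval_coeffs (-1) (Kterm p) $ n)"
  proof (rule sum.mono_neutral_left)
    show "\<forall>p\<in>{..<N} - {..n}. fps_eval_coeffs (-1) (Kterm p) $ n = 0"
    proof
      fix p assume "p \<in> {..<N} - {..n}"
      then have "n < p" by simp
      also have "p \<le> 2 * p\<^sup>2" by (simp add: power2_eq_square)
      finally show "fps_eval_coeffs (-1) (Kterm p) $ n = 0"
        by (rule Kterm_at_minus1_nth_eq_0)
    qed
  qed (use assms in auto)
  finally show ?thesis
    by (simp add: fps_sum_nth)
qed

lemma fps_mult_nth_cong:
  fixes f g h :: "'a::comm_ring_1 fps"
  assumes "\<And>m. m \<le> n \<Longrightarrow> f $ m = g $ m"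
  shows "(h * f) $ n = (h * g) $ n"
  unfolding fps_mult_nth using assms by (intro sum.cong) auto

lemma partial_sum_times_denominator:
  "(1 - fps_X ^ 2) * (1 - fps_X ^ 4) * (\<Sum>p<N. fps_eval_coeffs (-1) (Kterm p))
    = 1 - fps_X ^ 4 - fps_X ^ (2 * N\<^sup>2) * remainder (fps_X ^ 2) (fps_X ^ (2 * N))"
  unfolding sum_distrib_left Kterm_at_minus1_times_denominator summand_partial_sum
  by (simp add: power_mult)

lemma K_at_minus1_times_denominator:
  "(1 - fps_X ^ 2) * (1 - fps_X ^ 4) * K_at_minus1 = 1 - fps_X ^ 4"
proof (rule fps_ext)
  fix n
  have "((1 - fps_X ^ 2) * (1 - fps_X ^ 4) * K_at_minus1) $ n
      = ((1 - fps_X ^ 2) * (1 - fps_X ^ 4) * (\<Sum>p<Suc n. fps_eval_coeffs (-1) (Kterm p))) $ n"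
    by (rule fps_mult_nth_cong) (simp only: K_at_minus1_nth_partial_sum less_Suc_eq_le)
  also have "\<dots> = (1 - fps_X ^ 4 :: int fps) $ n"
  proof -
    have "n < 2 * (Suc n)\<^sup>2"
      by (simp add: power2_eq_square)
    then show ?thesis
      unfolding partial_sum_times_denominator fps_sub_nth fps_X_power_mult_nth
      by simp
  qed
  finally show "((1 - fps_X ^ 2) * (1 - fps_X ^ 4) * K_at_minus1) $ n = (1 - fps_X ^ 4) $ n" .
qed

theorem mainTheorem12:
  shows "K_at_minus1 = fps_right_inverse (1 - fps_X ^ 2 :: int fps) 1"
proof (rule fps_right_inverse_unique[symmetric])
  have nonzero: "(1 - fps_X ^ 4 :: int fps) \<noteq> 0"
  proof
    assume "(1 - fps_X ^ 4 :: int fps) = 0"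
    then have "(1 - fps_X ^ 4 :: int fps) $ 0 = (0 :: int fps) $ 0"
      by (simp only:)
    then show False
      by simp
  qed
  have "(1 - fps_X ^ 4) * ((1 - fps_X ^ 2) * K_at_minus1) = (1 - fps_X ^ 4) * 1"
    using K_at_minus1_times_denominator by (simp add: ac_simps)
  with nonzero show "(1 - fps_X ^ 2) * K_at_minus1 = 1"
    by (metis mult_left_cancel)
  show "(1 - fps_X ^ 2 :: int fps) $ 0 = 1"
    by simp
qed

end
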